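(* Let $m\ge 2$ and let $\alpha_1,\dots,\alpha_m\in\mathbb{R}$ be algebraically independent over $\mathbb{Q}$; let $K=\mathbb{Q}(\alpha_1,\dots,\alpha_m)$ and $K^+=\{x\in K: x>0\}$. Then for every integer $n\ge 2$ there exist infinitely many different ways to write $K^+$ as a union of $n$ pairwise disjoint nonempty subsets, each closed under addition and multiplication. *)

theory Defs
  imports Complex_Main
begin

text \<open>A polynomial is given as a finite set S of exponent vectors (functions nat => nat supported
  in {..<m}) together with rational coefficients c.\<close>
definition alg_indep_Q :: "nat \<Rightarrow> (nat \<Rightarrow> real) \<Rightarrow> bool" where
  "alg_indep_Q m \<alpha> \<longleftrightarrow>
     (\<forall>S c. finite S \<longrightarrow> S \<subseteq> {e :: nat \<Rightarrow> nat. \<forall>i\<ge>m. e i = 0} \<longrightarrow>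
        (\<Sum>e\<in>S. of_rat (c e) * (\<Prod>i<m. \<alpha> i ^ e i)) = 0 \<longrightarrow>
        (\<forall>e\<in>S. c e = (0::rat)))"

definition is_subfield :: "real set \<Rightarrow> bool" where
  "is_subfield F \<longleftrightarrow> 0 \<in> F \<and> 1 \<in> F \<and>
     (\<forall>x\<in>F. \<forall>y\<in>F. x + y \<in> F \<and> x - y \<in> F \<and> x * y \<in> F) \<and>
     (\<forall>x\<in>F. x \<noteq> 0 \<longrightarrow> inverse x \<in> F)"

definition gen_field :: "nat \<Rightarrow> (nat \<Rightarrow> real) \<Rightarrow> real set" where
  "gen_field m \<alpha> = \<Inter>{F. is_subfield F \<and> (\<forall>i<m. \<alpha> i \<in> F)}"

definition closed_add_mult :: "real set \<Rightarrow> bool" where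
  "closed_add_mult A \<longleftrightarrow> (\<forall>x\<in>A. \<forall>y\<in>A. x + y \<in> A \<and> x * y \<in> A)"

text \<open>Ways to write X as a union of n pairwise disjoint nonempty subsets, each closed under
  addition and multiplication (unordered: a way is the set of its n parts).\<close>
definition semiring_partitions :: "nat \<Rightarrow> real set \<Rightarrow> real set set set" where
  "semiring_partitions n X = {P. finite P \<and> card P = n \<and> \<Union>P = X \<and>
      (\<forall>A\<in>P. A \<noteq> {} \<and> closed_add_mult A) \<and>
      (\<forall>A\<in>P. \<forall>B\<in>P. A \<noteq> B \<longrightarrow> A \<inter> B = {})}"

end

theory Submission
  imports Defs "HOL-Computational_Algebra.Polynomial" "HOL-Library.Function_Algebras"
begin

text \<open>By algebraic independence, every direction c in R^m gives a derivation of
  K = Q(\<alpha>) sending \<alpha> i to c i. Dividing by x yields a logarithmic derivative L, which turns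
  products into sums and, on positive elements, sums into convex combinations:
  L(x + y) = x/(x + y) L x + y/(x + y) L y. With the Euler directions c = \<alpha> j e_j we get
  L_0, L_1 with L_j(\<alpha> i) = \<delta>_ij, so x \<mapsto> (L_0 x, L_1 x) maps K^+ onto a set containing Z^2,
  and the preimage of any cone closed under positive linear combinations is closed under + and *.
  Cutting the plane into n such cones and precomposing with the shears (a, b) \<mapsto> (a + k b, b)
  gives a partition of K^+ into n semirings for each k; different k give different partitions.\<close>

datatype pexpr = PConst int | PVar nat | PAdd pexpr pexpr | PMul pexpr pexpr | PNeg pexpr

primrec peval :: "(nat \<Rightarrow> 'a::comm_ring_1) \<Rightarrow> pexpr \<Rightarrow> 'a" where
  "peval x (PConst c) = of_int c"
| "peval x (PVar i) = x i"
| "peval x (PAdd a b) = peval x a + peval x b"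
| "peval x (PMul a b) = peval x a * peval x b"
| "peval x (PNeg a) = - peval x a"

primrec pvars :: "pexpr \<Rightarrow> nat set" where
  "pvars (PConst c) = {}"
| "pvars (PVar i) = {i}"
| "pvars (PAdd a b) = pvars a \<union> pvars b"
| "pvars (PMul a b) = pvars a \<union> pvars b"
| "pvars (PNeg a) = pvars a"

definition unit_exp :: "nat \<Rightarrow> nat \<Rightarrow> nat" where
  "unit_exp i = (\<lambda>j. if j = i then 1 else 0)"

primrec monomials :: "pexpr \<Rightarrow> (nat \<Rightarrow> nat) set" where
  "monomials (PConst c) = {0}"
| "monomials (PVar i) = {unit_exp i}"
| "monomials (PAdd a b) = monomials a \<union> monomials b"
| "monomials (PMul a b) = (\<lambda>(s, t). s + t) ` (monomials a \<times> monomials b)"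
| "monomials (PNeg a) = monomials a"

primrec pcoeff :: "pexpr \<Rightarrow> (nat \<Rightarrow> nat) \<Rightarrow> int" where
  "pcoeff (PConst c) u = (if u = 0 then c else 0)"
| "pcoeff (PVar i) u = (if u = unit_exp i then 1 else 0)"
| "pcoeff (PAdd a b) u = pcoeff a u + pcoeff b u"
| "pcoeff (PMul a b) u =
     (\<Sum>(s, t) \<in> {(s, t) \<in> monomials a \<times> monomials b. s + t = u}. pcoeff a s * pcoeff b t)"
| "pcoeff (PNeg a) u = - pcoeff a u"

definition monomial_value :: "nat \<Rightarrow> (nat \<Rightarrow> 'a::comm_ring_1) \<Rightarrow> (nat \<Rightarrow> nat) \<Rightarrow> 'a" where
  "monomial_value m x s = (\<Prod>i<m. x i ^ s i)"

lemma finite_monomials: "finite (monomials e)"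
  by (induction e) auto

lemma monomials_supported: "pvars e \<subseteq> {..<m} \<Longrightarrow> monomials e \<subseteq> {s. \<forall>i\<ge>m. s i = 0}"
  by (induction e) (fastforce simp: unit_exp_def)+

lemma pcoeff_eq_0: "u \<notin> monomials e \<Longrightarrow> pcoeff e u = 0"
proof (induction e arbitrary: u)
  case (PMul a b)
  then have "{(s, t) \<in> monomials a \<times> monomials b. s + t = u} = {}"
    by auto
  then show ?case
    by (simp only: pcoeff.simps sum.empty)
qed auto

lemma monomial_value_add: "monomial_value m x (s + t) = monomial_value m x s * monomial_value m x t"
  by (simp add: monomial_value_def power_add prod.distrib)

lemma monomial_value_unit_exp: "i < m \<Longrightarrow> monomial_value m x (unit_exp i) = x i"
  by (simp add: monomial_value_def unit_exp_def if_distrib cong: if_cong)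

lemma peval_expansion:
  "pvars e \<subseteq> {..<m} \<Longrightarrow> peval x e = (\<Sum>s\<in>monomials e. of_int (pcoeff e s) * monomial_value m x s)"
proof (induction e)
  case (PConst c)
  then show ?case by (simp add: monomial_value_def zero_fun_def)
next
  case (PVar i)
  then show ?case by (simp add: monomial_value_unit_exp)
next
  case (PAdd a b)
  have expand_to_union: "(\<Sum>s\<in>monomials e. of_int (pcoeff e s) * monomial_value m x s)
      = (\<Sum>s\<in>monomials a \<union> monomials b. of_int (pcoeff e s) * monomial_value m x s)"
    if "monomials e \<subseteq> monomials a \<union> monomials b" for e
    using that by (intro sum.mono_neutral_left) (auto simp: finite_monomials pcoeff_eq_0)
  show ?case
    using PAdd by (simp add: expand_to_union sum.distrib distrib_right)
next
  case (PMul a b)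
  let ?term = "\<lambda>(s, t). of_int (pcoeff a s * pcoeff b t) * monomial_value m x (s + t)"
  have "peval x (PMul a b) = (\<Sum>p \<in> monomials a \<times> monomials b. ?term p)"
    using PMul by (simp add: sum_product sum.cartesian_product monomial_value_add mult_ac)
  also have "\<dots> = (\<Sum>u\<in>monomials (PMul a b).
                    \<Sum>p \<in> {p \<in> monomials a \<times> monomials b. (\<lambda>(s, t). s + t) p = u}. ?term p)"
    unfolding monomials.simps by (rule sum.image_gen) (simp add: finite_monomials)
  also have "\<dots> = (\<Sum>u\<in>monomials (PMul a b). of_int (pcoeff (PMul a b) u) * monomial_value m x u)"
    by (intro sum.cong refl) (auto simp: sum_distrib_right split_def intro!: sum.cong)
  finally show ?case .
qed (simp add: sum_negf)

lemma alg_indep_Q_peval_eq_0: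
  fixes x :: "nat \<Rightarrow> 'a::comm_ring_1"
  assumes indep: "alg_indep_Q m \<alpha>" and vars: "pvars e \<subseteq> {..<m}" and root: "peval \<alpha> e = 0"
  shows "peval x e = 0"
proof -
  have "(\<Sum>s\<in>monomials e. of_rat (of_int (pcoeff e s)) * (\<Prod>i<m. \<alpha> i ^ s i)) = 0"
    using root peval_expansion[OF vars, of \<alpha>] by (simp add: monomial_value_def)
  from indep[unfolded alg_indep_Q_def, rule_format, OF finite_monomials monomials_supported[OF vars] this]
  have "\<forall>s\<in>monomials e. pcoeff e s = 0"
    by simp
  then show ?thesis
    using peval_expansion[OF vars, of x] by simp
qed

section \<open>The field Q(\<alpha>) as a field of fractions\<close>

definition frac_rep :: "nat \<Rightarrow> (nat \<Rightarrow> real) \<Rightarrow> real \<Rightarrow> pexpr \<Rightarrow> pexpr \<Rightarrow> bool" where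
  "frac_rep m \<alpha> x P Q \<longleftrightarrow>
     pvars P \<subseteq> {..<m} \<and> pvars Q \<subseteq> {..<m} \<and> peval \<alpha> Q \<noteq> 0 \<and> x = peval \<alpha> P / peval \<alpha> Q"

lemma frac_rep_numerator: "frac_rep m \<alpha> x P Q \<Longrightarrow> peval \<alpha> P = x * peval \<alpha> Q"
  by (simp add: frac_rep_def)

lemma frac_rep_add:
  "frac_rep m \<alpha> x P Q \<Longrightarrow> frac_rep m \<alpha> y P' Q' \<Longrightarrow>
     frac_rep m \<alpha> (x + y) (PAdd (PMul P Q') (PMul P' Q)) (PMul Q Q')"
  by (auto simp: frac_rep_def field_simps)

lemma frac_rep_diff:
  "frac_rep m \<alpha> x P Q \<Longrightarrow> frac_rep m \<alpha> y P' Q' \<Longrightarrow>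
     frac_rep m \<alpha> (x - y) (PAdd (PMul P Q') (PNeg (PMul P' Q))) (PMul Q Q')"
  by (auto simp: frac_rep_def field_simps)

lemma frac_rep_mult:
  "frac_rep m \<alpha> x P Q \<Longrightarrow> frac_rep m \<alpha> y P' Q' \<Longrightarrow> frac_rep m \<alpha> (x * y) (PMul P P') (PMul Q Q')"
  by (auto simp: frac_rep_def)

lemma frac_rep_inverse: "frac_rep m \<alpha> x P Q \<Longrightarrow> x \<noteq> 0 \<Longrightarrow> frac_rep m \<alpha> (inverse x) Q P"
  by (auto simp: frac_rep_def)

lemma frac_rep_of_int: "frac_rep m \<alpha> (of_int c) (PConst c) (PConst 1)"
  by (simp add: frac_rep_def)

lemma frac_rep_alpha: "i < m \<Longrightarrow> frac_rep m \<alpha> (\<alpha> i) (PVar i) (PConst 1)"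
  by (simp add: frac_rep_def)

lemma is_subfield_frac_reps: "is_subfield {x. \<exists>P Q. frac_rep m \<alpha> x P Q}"
  unfolding is_subfield_def
proof (intro conjI ballI impI)
  show "0 \<in> {x. \<exists>P Q. frac_rep m \<alpha> x P Q}" "1 \<in> {x. \<exists>P Q. frac_rep m \<alpha> x P Q}"
    using frac_rep_of_int[of m \<alpha> 0] frac_rep_of_int[of m \<alpha> 1] by auto
  fix x y assume "x \<in> {x. \<exists>P Q. frac_rep m \<alpha> x P Q}" "y \<in> {x. \<exists>P Q. frac_rep m \<alpha> x P Q}"
  then obtain P Q P' Q' where rep: "frac_rep m \<alpha> x P Q" "frac_rep m \<alpha> y P' Q'"
    by blast
  show "x + y \<in> {x. \<exists>P Q. frac_rep m \<alpha> x P Q}" "x - y \<in> {x. \<exists>P Q. frac_rep m \<alpha> x P Q}"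
    "x * y \<in> {x. \<exists>P Q. frac_rep m \<alpha> x P Q}"
    using frac_rep_add[OF rep] frac_rep_diff[OF rep] frac_rep_mult[OF rep] by blast+
next
  fix x assume "x \<in> {x. \<exists>P Q. frac_rep m \<alpha> x P Q}" "x \<noteq> 0"
  then show "inverse x \<in> {x. \<exists>P Q. frac_rep m \<alpha> x P Q}"
    using frac_rep_inverse by blast
qed

lemma is_subfield_gen_field: "is_subfield (gen_field m \<alpha>)"
  unfolding gen_field_def is_subfield_def by auto

lemma alpha_in_gen_field: "i < m \<Longrightarrow> \<alpha> i \<in> gen_field m \<alpha>"
  unfolding gen_field_def by auto

lemma gen_field_frac_rep:
  assumes "x \<in> gen_field m \<alpha>"
  obtains P Q where "frac_rep m \<alpha> x P Q"
proof -
  have "gen_field m \<alpha> \<subseteq> {x. \<exists>P Q. frac_rep m \<alpha> x P Q}"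
    unfolding gen_field_def using is_subfield_frac_reps frac_rep_alpha by blast
  then show ?thesis
    using assms that by blast
qed

lemma gen_field_add: "x \<in> gen_field m \<alpha> \<Longrightarrow> y \<in> gen_field m \<alpha> \<Longrightarrow> x + y \<in> gen_field m \<alpha>"
  and gen_field_diff: "x \<in> gen_field m \<alpha> \<Longrightarrow> y \<in> gen_field m \<alpha> \<Longrightarrow> x - y \<in> gen_field m \<alpha>"
  and gen_field_mult: "x \<in> gen_field m \<alpha> \<Longrightarrow> y \<in> gen_field m \<alpha> \<Longrightarrow> x * y \<in> gen_field m \<alpha>"
  and gen_field_inverse: "x \<in> gen_field m \<alpha> \<Longrightarrow> inverse x \<in> gen_field m \<alpha>"
  using is_subfield_gen_field[of m \<alpha>] unfolding is_subfield_def
  by (auto simp del: inverse_eq_divide)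

lemma gen_field_abs: "x \<in> gen_field m \<alpha> \<Longrightarrow> \<bar>x\<bar> \<in> gen_field m \<alpha>"
  using gen_field_diff[of 0 m \<alpha> x] is_subfield_gen_field[of m \<alpha>]
  by (simp add: abs_if is_subfield_def)

lemma gen_field_power: "x \<in> gen_field m \<alpha> \<Longrightarrow> x ^ n \<in> gen_field m \<alpha>"
  using is_subfield_gen_field[of m \<alpha>] by (induction n) (auto simp: is_subfield_def)

lemma gen_field_power_int: "x \<in> gen_field m \<alpha> \<Longrightarrow> x powi k \<in> gen_field m \<alpha>"
  by (cases k rule: int_cases2) (auto simp: power_int_minus gen_field_power gen_field_inverse)

section \<open>Derivations and logarithmic derivatives of Q(\<alpha>)\<close>

text \<open>Evaluation at the dual numbers \<alpha> i + c i \<epsilon>, realised as linear real polynomials in \<epsilon>: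
  the coefficient of \<epsilon> is the derivative in direction c.\<close>
definition pe_deriv :: "(nat \<Rightarrow> real) \<Rightarrow> (nat \<Rightarrow> real) \<Rightarrow> pexpr \<Rightarrow> real" where
  "pe_deriv \<alpha> c e = coeff (peval (\<lambda>i. [:\<alpha> i, c i:]) e) 1"

lemma coeff_0_peval_dual: "coeff (peval (\<lambda>i. [:\<alpha> i, c i:]) e) 0 = peval \<alpha> e"
  by (induction e) (auto simp: coeff_mult of_int_poly)

lemma pe_deriv_simps [simp]:
  "pe_deriv \<alpha> c (PConst k) = 0"
  "pe_deriv \<alpha> c (PVar i) = c i"
  "pe_deriv \<alpha> c (PAdd a b) = pe_deriv \<alpha> c a + pe_deriv \<alpha> c b"
  "pe_deriv \<alpha> c (PMul a b) = peval \<alpha> a * pe_deriv \<alpha> c b + pe_deriv \<alpha> c a * peval \<alpha> b"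
  "pe_deriv \<alpha> c (PNeg a) = - pe_deriv \<alpha> c a"
  by (auto simp: pe_deriv_def of_int_poly coeff_mult coeff_0_peval_dual)

lemma alg_indep_Q_pe_deriv_eq_0:
  "alg_indep_Q m \<alpha> \<Longrightarrow> pvars e \<subseteq> {..<m} \<Longrightarrow> peval \<alpha> e = 0 \<Longrightarrow> pe_deriv \<alpha> c e = 0"
  using alg_indep_Q_peval_eq_0[of m \<alpha> e "\<lambda>i. [:\<alpha> i, c i:]"] by (simp add: pe_deriv_def)

definition frac_deriv :: "(nat \<Rightarrow> real) \<Rightarrow> (nat \<Rightarrow> real) \<Rightarrow> pexpr \<Rightarrow> pexpr \<Rightarrow> real" where
  "frac_deriv \<alpha> c P Q =
     (pe_deriv \<alpha> c P * peval \<alpha> Q - peval \<alpha> P * pe_deriv \<alpha> c Q) / (peval \<alpha> Q)\<^sup>2"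

lemma frac_deriv_eq:
  "frac_rep m \<alpha> x P Q \<Longrightarrow> frac_deriv \<alpha> c P Q = (pe_deriv \<alpha> c P - x * pe_deriv \<alpha> c Q) / peval \<alpha> Q"
  by (auto simp: frac_rep_def frac_deriv_def field_simps power2_eq_square)

lemma frac_deriv_unique:
  assumes indep: "alg_indep_Q m \<alpha>"
    and rep: "frac_rep m \<alpha> x P Q" and rep': "frac_rep m \<alpha> x P' Q'"
  shows "frac_deriv \<alpha> c P Q = frac_deriv \<alpha> c P' Q'"
proof -
  have nonzero: "peval \<alpha> Q \<noteq> 0" "peval \<alpha> Q' \<noteq> 0"
    using rep rep' by (auto simp: frac_rep_def)
  have PQ: "peval \<alpha> P = x * peval \<alpha> Q" "peval \<alpha> P' = x * peval \<alpha> Q'"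
    using rep rep' by (simp_all add: frac_rep_numerator)
  have vars: "pvars P \<union> pvars Q \<union> pvars P' \<union> pvars Q' \<subseteq> {..<m}"
    using rep rep' by (auto simp: frac_rep_def)
  let ?e = "PAdd (PMul P Q') (PNeg (PMul P' Q))"
  have "pe_deriv \<alpha> c ?e = 0"
    using vars by (intro alg_indep_Q_pe_deriv_eq_0[OF indep]) (auto simp: PQ)
  then have "(pe_deriv \<alpha> c P - x * pe_deriv \<alpha> c Q) * peval \<alpha> Q'
      = (pe_deriv \<alpha> c P' - x * pe_deriv \<alpha> c Q') * peval \<alpha> Q"
    by (simp add: PQ algebra_simps)
  then show ?thesis
    using nonzero by (simp add: frac_deriv_eq[OF rep] frac_deriv_eq[OF rep'] frac_eq_eq)
qed

definition gen_field_deriv :: "nat \<Rightarrow> (nat \<Rightarrow> real) \<Rightarrow> (nat \<Rightarrow> real) \<Rightarrow> real \<Rightarrow> real" where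
  "gen_field_deriv m \<alpha> c x = (SOME d. \<exists>P Q. frac_rep m \<alpha> x P Q \<and> d = frac_deriv \<alpha> c P Q)"

definition log_deriv :: "nat \<Rightarrow> (nat \<Rightarrow> real) \<Rightarrow> (nat \<Rightarrow> real) \<Rightarrow> real \<Rightarrow> real" where
  "log_deriv m \<alpha> c x = gen_field_deriv m \<alpha> c x / x"

definition log_degree :: "nat \<Rightarrow> (nat \<Rightarrow> real) \<Rightarrow> nat \<Rightarrow> real \<Rightarrow> real" where
  "log_degree m \<alpha> j = log_deriv m \<alpha> (\<lambda>i. if i = j then \<alpha> i else 0)"

context
  fixes m :: nat and \<alpha> :: "nat \<Rightarrow> real"
  assumes indep: "alg_indep_Q m \<alpha>"
begin

lemma alpha_nonzero: "i < m \<Longrightarrow> \<alpha> i \<noteq> 0"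
  using alg_indep_Q_peval_eq_0[OF indep, of "PVar i" "\<lambda>_. 1 :: real"] by auto

lemma gen_field_deriv_frac_rep:
  assumes rep: "frac_rep m \<alpha> x P Q"
  shows "gen_field_deriv m \<alpha> c x = frac_deriv \<alpha> c P Q"
proof -
  have "\<exists>d P Q. frac_rep m \<alpha> x P Q \<and> d = frac_deriv \<alpha> c P Q"
    using rep by blast
  from someI_ex[OF this] obtain P' Q'
    where "frac_rep m \<alpha> x P' Q'" "gen_field_deriv m \<alpha> c x = frac_deriv \<alpha> c P' Q'"
    unfolding gen_field_deriv_def by blast
  then show ?thesis
    using frac_deriv_unique[OF indep rep] by simp
qed

lemma gen_field_deriv_add:
  assumes "x \<in> gen_field m \<alpha>" "y \<in> gen_field m \<alpha>"
  shows "gen_field_deriv m \<alpha> c (x + y) = gen_field_deriv m \<alpha> c x + gen_field_deriv m \<alpha> c y"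
proof -
  obtain P Q P' Q' where rep: "frac_rep m \<alpha> x P Q" "frac_rep m \<alpha> y P' Q'"
    using assms gen_field_frac_rep by metis
  have "peval \<alpha> Q \<noteq> 0" "peval \<alpha> Q' \<noteq> 0"
    using rep by (auto simp: frac_rep_def)
  then show ?thesis
    unfolding gen_field_deriv_frac_rep[OF frac_rep_add[OF rep]] gen_field_deriv_frac_rep[OF rep(1)]
      gen_field_deriv_frac_rep[OF rep(2)] frac_deriv_eq[OF frac_rep_add[OF rep]]
      frac_deriv_eq[OF rep(1)] frac_deriv_eq[OF rep(2)]
    by (simp add: frac_rep_numerator[OF rep(1)] frac_rep_numerator[OF rep(2)] field_simps)
qed

lemma gen_field_deriv_mult:
  assumes "x \<in> gen_field m \<alpha>" "y \<in> gen_field m \<alpha>"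
  shows "gen_field_deriv m \<alpha> c (x * y) = x * gen_field_deriv m \<alpha> c y + y * gen_field_deriv m \<alpha> c x"
proof -
  obtain P Q P' Q' where rep: "frac_rep m \<alpha> x P Q" "frac_rep m \<alpha> y P' Q'"
    using assms gen_field_frac_rep by metis
  have "peval \<alpha> Q \<noteq> 0" "peval \<alpha> Q' \<noteq> 0"
    using rep by (auto simp: frac_rep_def)
  then show ?thesis
    unfolding gen_field_deriv_frac_rep[OF frac_rep_mult[OF rep]] gen_field_deriv_frac_rep[OF rep(1)]
      gen_field_deriv_frac_rep[OF rep(2)] frac_deriv_eq[OF frac_rep_mult[OF rep]]
      frac_deriv_eq[OF rep(1)] frac_deriv_eq[OF rep(2)]
    by (simp add: frac_rep_numerator[OF rep(1)] frac_rep_numerator[OF rep(2)] field_simps)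
qed

lemma gen_field_deriv_alpha: "i < m \<Longrightarrow> gen_field_deriv m \<alpha> c (\<alpha> i) = c i"
  by (simp add: gen_field_deriv_frac_rep[OF frac_rep_alpha] frac_deriv_def)

lemma log_deriv_mult:
  "x \<in> gen_field m \<alpha> \<Longrightarrow> y \<in> gen_field m \<alpha> \<Longrightarrow> x \<noteq> 0 \<Longrightarrow> y \<noteq> 0 \<Longrightarrow>
     log_deriv m \<alpha> c (x * y) = log_deriv m \<alpha> c x + log_deriv m \<alpha> c y"
  by (simp add: log_deriv_def gen_field_deriv_mult field_simps)

lemma log_deriv_add:
  "x \<in> gen_field m \<alpha> \<Longrightarrow> y \<in> gen_field m \<alpha> \<Longrightarrow> x \<noteq> 0 \<Longrightarrow> y \<noteq> 0 \<Longrightarrow> x + y \<noteq> 0 \<Longrightarrow>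
     log_deriv m \<alpha> c (x + y) = x / (x + y) * log_deriv m \<alpha> c x + y / (x + y) * log_deriv m \<alpha> c y"
  by (simp add: log_deriv_def gen_field_deriv_add add_divide_distrib)

lemma log_deriv_one: "log_deriv m \<alpha> c 1 = 0"
  using log_deriv_mult[of 1 1 c] is_subfield_gen_field[of m \<alpha>] by (simp add: is_subfield_def)

lemma log_deriv_inverse:
  "x \<in> gen_field m \<alpha> \<Longrightarrow> x \<noteq> 0 \<Longrightarrow> log_deriv m \<alpha> c (inverse x) = - log_deriv m \<alpha> c x"
  using log_deriv_mult[of x "inverse x" c] gen_field_inverse[of x m \<alpha>] by (simp add: log_deriv_one)

lemma log_deriv_power_int:
  assumes x: "x \<in> gen_field m \<alpha>" "x \<noteq> 0"
  shows "log_deriv m \<alpha> c (x powi k) = of_int k * log_deriv m \<alpha> c x"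
proof -
  have "log_deriv m \<alpha> c (x ^ n) = of_nat n * log_deriv m \<alpha> c x" for n
  proof (induction n)
    case (Suc n)
    then show ?case
      using log_deriv_mult[of x "x ^ n" c] gen_field_power[of x m \<alpha> n] x
      by (simp add: algebra_simps)
  qed (simp add: log_deriv_one)
  then show ?thesis
    using x gen_field_power[of x m \<alpha>]
    by (cases k rule: int_cases2) (auto simp: power_int_minus log_deriv_inverse)
qed

lemma log_deriv_abs:
  assumes x: "x \<in> gen_field m \<alpha>" "x \<noteq> 0"
  shows "log_deriv m \<alpha> c \<bar>x\<bar> = log_deriv m \<alpha> c x"
proof -
  have minus_one: "- 1 \<in> gen_field m \<alpha>"
    using is_subfield_gen_field[of m \<alpha>] by (auto simp: is_subfield_def)
  then have "log_deriv m \<alpha> c (- 1) = 0"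
    using log_deriv_mult[of "- 1" "- 1" c] by (simp add: log_deriv_one)
  then show ?thesis
    using log_deriv_mult[OF minus_one x(1), of c] x by (simp add: abs_if)
qed

lemma log_degree_alpha: "i < m \<Longrightarrow> log_degree m \<alpha> j (\<alpha> i) = (if i = j then 1 else 0)"
  by (simp add: log_degree_def log_deriv_def gen_field_deriv_alpha alpha_nonzero)

end

section \<open>Sectors of the plane\<close>

definition lex_pos :: "real \<Rightarrow> real \<Rightarrow> bool" where
  "lex_pos a b \<longleftrightarrow> 0 < a \<or> (a = 0 \<and> 0 < b)"

text \<open>Sector 0 is the lexicographically nonpositive half-plane; the rest of the plane is cut
  along the rays of slope 1, ..., n - 2, the positive b-axis belonging to sector n - 1.\<close>
definition sector :: "nat \<Rightarrow> real \<Rightarrow> real \<Rightarrow> nat" where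
  "sector n a b =
     (if \<not> lex_pos a b then 0 else if a = 0 then n - 1 else min (n - 1) (nat \<lfloor>b / a\<rfloor> + 1))"

lemma sector_less: "0 < n \<Longrightarrow> sector n a b < n"
  by (simp add: sector_def min_less_iff_disj)

lemma sector_eq_0_iff: "2 \<le> n \<Longrightarrow> sector n a b = 0 \<longleftrightarrow> \<not> lex_pos a b"
  by (simp add: sector_def)

lemma lex_pos_comb:
  "lex_pos a b \<Longrightarrow> lex_pos a' b' \<Longrightarrow> 0 < s \<Longrightarrow> 0 < t \<Longrightarrow> lex_pos (s * a + t * a') (s * b + t * b')"
  by (auto simp: lex_pos_def add_pos_nonneg add_nonneg_pos)

lemma not_lex_pos_comb:
  assumes "\<not> lex_pos a b" "\<not> lex_pos a' b'" and st: "0 < s" "0 < t"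
  shows "\<not> lex_pos (s * a + t * a') (s * b + t * b')"
proof (cases "a = 0 \<and> a' = 0")
  case True
  then have "b \<le> 0" "b' \<le> 0"
    using assms by (auto simp: lex_pos_def)
  then show ?thesis
    using True st by (simp add: lex_pos_def not_less add_nonpos_nonpos mult_nonneg_nonpos)
next
  case False
  then have "a < 0 \<or> a' < 0" "a \<le> 0" "a' \<le> 0"
    using assms by (auto simp: lex_pos_def)
  then have "s * a + t * a' < 0"
    using st by (smt (verit) mult_pos_neg mult_nonneg_nonpos)
  then show ?thesis
    by (simp add: lex_pos_def)
qed

text \<open>The hypothesis b * a' \<le> b' * a compares slopes without division.\<close>
lemma sector_mono:
  assumes "lex_pos a b" "lex_pos a' b'" and slope: "b * a' \<le> b' * a"
  shows "sector n a b \<le> sector n a' b'"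
proof (cases "a' = 0")
  case False
  then have a': "0 < a'"
    using assms by (auto simp: lex_pos_def)
  have a: "0 < a"
  proof (rule ccontr)
    assume "\<not> 0 < a"
    then have "a = 0" "0 < b"
      using assms(1) by (auto simp: lex_pos_def)
    then show False
      using slope a' by (auto simp: mult_le_0_iff)
  qed
  have "b / a \<le> b' / a'"
    using slope a a' by (simp add: divide_simps mult.commute)
  then have "nat \<lfloor>b / a\<rfloor> \<le> nat \<lfloor>b' / a'\<rfloor>"
    by (intro nat_mono floor_mono)
  then show ?thesis
    using assms a a' by (simp add: sector_def min.coboundedI2)
qed (use assms in \<open>auto simp: sector_def\<close>)

lemma sector_comb_between:
  assumes u: "lex_pos a b" and v: "lex_pos a' b'" and slope: "b * a' \<le> b' * a"
    and st: "0 < s" "0 < t"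
  shows "sector n a b \<le> sector n (s * a + t * a') (s * b + t * b')"
    and "sector n (s * a + t * a') (s * b + t * b') \<le> sector n a' b'"
proof -
  have w: "lex_pos (s * a + t * a') (s * b + t * b')"
    using lex_pos_comb[OF u v st] .
  have "t * (b * a') \<le> t * (b' * a)" "s * (b * a') \<le> s * (b' * a)"
    using slope st by simp_all
  then show "sector n a b \<le> sector n (s * a + t * a') (s * b + t * b')"
    and "sector n (s * a + t * a') (s * b + t * b') \<le> sector n a' b'"
    by (intro sector_mono u v w; simp add: algebra_simps)+
qed

lemma sector_comb:
  assumes n: "2 \<le> n" and j: "sector n a b = j" "sector n a' b' = j" and st: "0 < s" "0 < t"
  shows "sector n (s * a + t * a') (s * b + t * b') = j"
proof (cases "j = 0")
  case True
  then show ?thesis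
    using j st not_lex_pos_comb by (simp add: sector_eq_0_iff[OF n])
next
  case False
  then have u: "lex_pos a b" and v: "lex_pos a' b'"
    using j sector_eq_0_iff[OF n] by metis+
  show ?thesis
  proof (cases "b * a' \<le> b' * a")
    case True
    show ?thesis
      using sector_comb_between[OF u v True st, of n] j by simp
  next
    case False
    then have "b' * a \<le> b * a'"
      by simp
    from sector_comb_between[OF v u this st(2,1), of n] j show ?thesis
      by (simp add: add.commute)
  qed
qed

section \<open>Partitions of the positive cone\<close>

definition fiber_family :: "('a \<Rightarrow> nat) \<Rightarrow> nat \<Rightarrow> 'a set \<Rightarrow> 'a set set" where
  "fiber_family f n X = (\<lambda>j. {x \<in> X. f x = j}) ` {..<n}"

lemma fiber_family_in_semiring_partitions:
  assumes range: "\<forall>x\<in>X. f x < n" and onto: "\<forall>j<n. \<exists>x\<in>X. f x = j"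
    and closed: "\<forall>j<n. closed_add_mult {x \<in> X. f x = j}"
  shows "fiber_family f n X \<in> semiring_partitions n X"
proof -
  have "inj_on (\<lambda>j. {x \<in> X. f x = j}) {..<n}"
    using onto by (intro inj_onI) blast
  then have "card (fiber_family f n X) = n"
    by (simp add: fiber_family_def card_image)
  moreover have "\<Union>(fiber_family f n X) = X"
    using range by (auto simp: fiber_family_def)
  ultimately show ?thesis
    using onto closed unfolding semiring_partitions_def fiber_family_def by auto
qed

definition lattice_point :: "(nat \<Rightarrow> real) \<Rightarrow> int \<Rightarrow> int \<Rightarrow> real" where
  "lattice_point \<alpha> p q = \<bar>\<alpha> 0\<bar> powi p * \<bar>\<alpha> 1\<bar> powi q"

definition sheared_sector :: "nat \<Rightarrow> (nat \<Rightarrow> real) \<Rightarrow> nat \<Rightarrow> nat \<Rightarrow> real \<Rightarrow> nat" where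
  "sheared_sector m \<alpha> n k x =
     sector n (log_degree m \<alpha> 0 x + real k * log_degree m \<alpha> 1 x) (log_degree m \<alpha> 1 x)"

context
  fixes m :: nat and \<alpha> :: "nat \<Rightarrow> real"
  assumes indep: "alg_indep_Q m \<alpha>" and m: "2 \<le> m"
begin

lemma
  shows lattice_point_in_gen_field: "lattice_point \<alpha> p q \<in> gen_field m \<alpha>"
    and lattice_point_pos: "0 < lattice_point \<alpha> p q"
    and log_degree_lattice_point: "log_degree m \<alpha> 0 (lattice_point \<alpha> p q) = p"
      "log_degree m \<alpha> 1 (lattice_point \<alpha> p q) = q"
proof -
  have base: "\<alpha> i \<in> gen_field m \<alpha>" "\<bar>\<alpha> i\<bar> \<in> gen_field m \<alpha>" "\<alpha> i \<noteq> 0"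
    if "i < 2" for i
    using that m alpha_in_gen_field[of i m \<alpha>] gen_field_abs alpha_nonzero[OF indep, of i] by auto
  then have powers: "\<bar>\<alpha> i\<bar> powi r \<in> gen_field m \<alpha>" "0 < \<bar>\<alpha> i\<bar> powi r" if "i < 2" for i r
    using that gen_field_power_int by auto
  then show "lattice_point \<alpha> p q \<in> gen_field m \<alpha>" "0 < lattice_point \<alpha> p q"
    by (auto simp: lattice_point_def gen_field_mult)
  have "log_degree m \<alpha> j (lattice_point \<alpha> p q)
      = of_int p * log_degree m \<alpha> j (\<alpha> 0) + of_int q * log_degree m \<alpha> j (\<alpha> 1)" for j
    using base[of 0] base[of 1] powers[of 0] powers[of 1]
    by (simp add: lattice_point_def log_degree_def log_deriv_mult[OF indep]
        log_deriv_power_int[OF indep] log_deriv_abs[OF indep] gen_field_abs)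
  then show "log_degree m \<alpha> 0 (lattice_point \<alpha> p q) = p" "log_degree m \<alpha> 1 (lattice_point \<alpha> p q) = q"
    using m by (simp_all add: log_degree_alpha[OF indep])
qed

lemma sheared_sector_lattice_point:
  "sheared_sector m \<alpha> n k (lattice_point \<alpha> p q) = sector n (of_int p + real k * of_int q) (of_int q)"
  unfolding sheared_sector_def log_degree_lattice_point ..

lemma sheared_sector_fiber_closed:
  assumes n: "2 \<le> n"
  shows "closed_add_mult {x \<in> {x \<in> gen_field m \<alpha>. 0 < x}. sheared_sector m \<alpha> n k x = j}"
  unfolding closed_add_mult_def
proof (intro ballI conjI)
  fix x y
  assume "x \<in> {x \<in> {x \<in> gen_field m \<alpha>. 0 < x}. sheared_sector m \<alpha> n k x = j}"
    and "y \<in> {x \<in> {x \<in> gen_field m \<alpha>. 0 < x}. sheared_sector m \<alpha> n k x = j}"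
  then have x: "x \<in> gen_field m \<alpha>" "0 < x" "sheared_sector m \<alpha> n k x = j"
    and y: "y \<in> gen_field m \<alpha>" "0 < y" "sheared_sector m \<alpha> n k y = j"
    by auto
  have comb: "sheared_sector m \<alpha> n k z = j"
    if L: "\<And>i. log_degree m \<alpha> i z = s * log_degree m \<alpha> i x + t * log_degree m \<alpha> i y"
      and st: "0 < s" "0 < t" for z s t
    using sector_comb[OF n x(3)[unfolded sheared_sector_def] y(3)[unfolded sheared_sector_def] st]
    by (simp add: sheared_sector_def L algebra_simps)
  have "sheared_sector m \<alpha> n k (x * y) = j"
    using x y by (intro comb[of _ 1 1]) (simp_all add: log_degree_def log_deriv_mult[OF indep])
  then show "x * y \<in> {x \<in> {x \<in> gen_field m \<alpha>. 0 < x}. sheared_sector m \<alpha> n k x = j}"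
    using x y by (simp add: gen_field_mult)
  have "sheared_sector m \<alpha> n k (x + y) = j"
    using x y by (intro comb[of _ "x / (x + y)" "y / (x + y)"])
      (simp_all add: log_degree_def log_deriv_add[OF indep])
  then show "x + y \<in> {x \<in> {x \<in> gen_field m \<alpha>. 0 < x}. sheared_sector m \<alpha> n k x = j}"
    using x y by (simp add: gen_field_add)
qed

lemma sheared_sector_partition:
  assumes n: "2 \<le> n"
  shows "fiber_family (sheared_sector m \<alpha> n k) n {x \<in> gen_field m \<alpha>. 0 < x}
           \<in> semiring_partitions n {x \<in> gen_field m \<alpha>. 0 < x}"
proof (rule fiber_family_in_semiring_partitions)
  show "\<forall>x\<in>{x \<in> gen_field m \<alpha>. 0 < x}. sheared_sector m \<alpha> n k x < n"
    using n by (simp add: sheared_sector_def sector_less)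
  show "\<forall>j<n. closed_add_mult {x \<in> {x \<in> gen_field m \<alpha>. 0 < x}. sheared_sector m \<alpha> n k x = j}"
    using sheared_sector_fiber_closed[OF n] by blast
  show "\<forall>j<n. \<exists>x\<in>{x \<in> gen_field m \<alpha>. 0 < x}. sheared_sector m \<alpha> n k x = j"
  proof (intro allI impI)
    fix j assume "j < n"
    \<comment> \<open>lattice points with sheared coordinates (-1, 0) and (1, j - 1)\<close>
    have "sheared_sector m \<alpha> n k (lattice_point \<alpha> (-1) 0) = 0"
      by (simp add: sheared_sector_lattice_point sector_def lex_pos_def)
    moreover have "sheared_sector m \<alpha> n k (lattice_point \<alpha> (1 - int k * (int j - 1)) (int j - 1)) = j"
      if "j \<noteq> 0"
      using that \<open>j < n\<close>
      by (simp add: sheared_sector_lattice_point sector_def lex_pos_def of_nat_diff algebra_simps)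
    ultimately show "\<exists>x\<in>{x \<in> gen_field m \<alpha>. 0 < x}. sheared_sector m \<alpha> n k x = j"
      using lattice_point_in_gen_field lattice_point_pos by (cases "j = 0") blast+
  qed
qed

lemma sheared_sector_partitions_distinct:
  assumes n: "2 \<le> n" and "k < k'"
  shows "fiber_family (sheared_sector m \<alpha> n k) n {x \<in> gen_field m \<alpha>. 0 < x}
           \<noteq> fiber_family (sheared_sector m \<alpha> n k') n {x \<in> gen_field m \<alpha>. 0 < x}"
proof
  \<comment> \<open>the part containing 1 = lattice_point \<alpha> 0 0 contains lattice_point \<alpha> (- k') 1
    for the shear k but not for k'\<close>
  define F where "F \<kappa> i = {x \<in> {x \<in> gen_field m \<alpha>. 0 < x}. sheared_sector m \<alpha> n \<kappa> x = i}" for \<kappa> i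
  have family: "fiber_family (sheared_sector m \<alpha> n \<kappa>) n {x \<in> gen_field m \<alpha>. 0 < x} = F \<kappa> ` {..<n}"
    for \<kappa>
    by (simp add: fiber_family_def F_def)
  assume "fiber_family (sheared_sector m \<alpha> n k) n {x \<in> gen_field m \<alpha>. 0 < x}
           = fiber_family (sheared_sector m \<alpha> n k') n {x \<in> gen_field m \<alpha>. 0 < x}"
  moreover have "F k 0 \<in> F k ` {..<n}"
    using n by simp
  ultimately have "F k 0 \<in> F k' ` {..<n}"
    by (simp add: family)
  then obtain j where j: "j < n" "F k 0 = F k' j"
    by blast
  have one: "lattice_point \<alpha> 0 0 \<in> F \<kappa> 0" for \<kappa>
    by (simp add: F_def lattice_point_in_gen_field lattice_point_pos sheared_sector_lattice_point
        sector_def lex_pos_def)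
  then have "j = 0"
    using j one[of k] by (simp add: F_def)
  moreover have "lattice_point \<alpha> (- k') 1 \<in> F k 0"
    using \<open>k < k'\<close> by (simp add: F_def lattice_point_in_gen_field lattice_point_pos
        sheared_sector_lattice_point sector_def lex_pos_def)
  moreover have "lattice_point \<alpha> (- k') 1 \<notin> F k' 0"
    using n by (simp add: F_def sheared_sector_lattice_point sector_def lex_pos_def)
  ultimately show False
    using j by simp
qed

end

theorem proposition2p3:
  fixes m :: nat and \<alpha> :: "nat \<Rightarrow> real"
  assumes "m \<ge> 2" and "alg_indep_Q m \<alpha>"
  shows "\<forall>n::nat. n \<ge> 2 \<longrightarrow>
           infinite (semiring_partitions n {x \<in> gen_field m \<alpha>. x > 0})"
proof (intro allI impI)
  fix n :: nat
  assume n: "n \<ge> 2"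
  let ?partition = "\<lambda>k. fiber_family (sheared_sector m \<alpha> n k) n {x \<in> gen_field m \<alpha>. 0 < x}"
  have "inj ?partition"
  proof (rule injI)
    fix k k' assume "?partition k = ?partition k'"
    then show "k = k'"
      using sheared_sector_partitions_distinct[OF assms(2,1) n] by (metis linorder_neq_iff)
  qed
  then have "infinite (range ?partition)"
    by (rule range_inj_infinite)
  moreover have "range ?partition \<subseteq> semiring_partitions n {x \<in> gen_field m \<alpha>. 0 < x}"
    using sheared_sector_partition[OF assms(2,1) n] by blast
  ultimately show "infinite (semiring_partitions n {x \<in> gen_field m \<alpha>. x > 0})"
    using infinite_super by blast
qed

end
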